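(* Let $M\ge 2$, $\gamma_r\ge 0$ and $K>0$, and let $p_r(i)=i^{-\gamma_r}/\sum_{j=1}^M j^{-\gamma_r}$. Put $b=\gamma_r/K$, and suppose $b\le[M\log M-\log(M!)]^{-1}$. Then the maximizer of $$\sum_{i=1}^M p_r(i)\big(1-e^{-K p_c(i)}\big)$$ over probability vectors $(p_c(1),\dots,p_c(M))$ is $$p_c(i)=a_i+b\log\Big(\frac{i+1}{i}\Big),\qquad a_i=\frac1M+\frac bM\sum_{j=1}^M\log\Big(\frac{j}{i+1}\Big),\qquad i=1,\dots,M.$$ Equivalently, $p_c(i)=\frac1M+\frac bM\sum_{j=1}^M\log(j/i)$, and these values are nonnegative and sum to $1$. In the application, $K=\frac{\pi\lambda_t\beta({\rm T},4)}{\sqrt{\mu{\rm T}\sigma^2}}$, so that $b=\frac{\sqrt{\mu{\rm T}\sigma^2}\,\gamma_r}{\pi\lambda_t\beta({\rm T},4)}$.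
   Context: The objective is an approximation of the sequential density of successful receptions for Rayleigh fading, arbitrary noise $\sigma^2>0$ and path loss exponent $\alpha=4$. It is obtained by replacing the Gaussian tail function in $$p_{\rm cov}({\rm T},\lambda_t p_c(i),4)=\frac{\sqrt{2\pi}}{\beta({\rm T},4)}\,x\,{\rm Q}(x)e^{x^2/2},\qquad x=\frac{\pi\lambda_t p_c(i)\beta({\rm T},4)}{\sqrt{2\mu{\rm T}\sigma^2}},$$ with the approximation ${\rm Q}(x)\approx\frac{(1-e^{-1.4x})e^{-x^2/2}}{1.135\sqrt{2\pi}\,x}$. This gives $$p_{\rm cov}\approx\frac{1}{1.135\,\beta({\rm T},4)}\Big(1-e^{-\pi\lambda_t p_c(i)\beta({\rm T},4)/\sqrt{\mu{\rm T}\sigma^2}}\Big).$$ Here $\lambda_t$ is the transmitter intensity, $\beta({\rm T},4)=1+\sqrt{\rm T}\arctan\sqrt{\rm T}$, $1/\mu$ is the transmit power, and $p_r$ and $p_c$ are the request and caching probability mass functions over $M$ files. *)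

theory Defs
  imports Complex_Main
begin

definition p_req :: "nat \<Rightarrow> real \<Rightarrow> nat \<Rightarrow> real" where
  "p_req M gr i = real i powr (- gr) / (\<Sum>j=1..M. real j powr (- gr))"

text \<open>Probability vectors over files 1..M (values outside 1..M are irrelevant).\<close>
definition prob_vec :: "nat \<Rightarrow> (nat \<Rightarrow> real) \<Rightarrow> bool" where
  "prob_vec M q \<longleftrightarrow> (\<forall>i\<in>{1..M}. 0 \<le> q i) \<and> (\<Sum>i=1..M. q i) = 1"

text \<open>Objective: approximate density of successful receptions.\<close>
definition succ_obj :: "nat \<Rightarrow> real \<Rightarrow> real \<Rightarrow> (nat \<Rightarrow> real) \<Rightarrow> real" where
  "succ_obj M gr K q = (\<Sum>i=1..M. p_req M gr i * (1 - exp (- K * q i)))"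

end

theory Submission
  imports Defs
begin

text \<open>The objective is a separable sum of the strictly concave utilities
\<open>p\<^sub>i (1 - exp (-K t))\<close>. The claimed vector equalizes the marginal utilities
\<open>K p\<^sub>i exp (-K x\<^sub>i)\<close>, because \<open>exp (-K x\<^sub>i)\<close> is proportional to \<open>i powr \<gamma>\<^sub>r\<close> when
\<open>K b = \<gamma>\<^sub>r\<close>. Summing the tangent-line inequalities then shows that every \<open>q\<close> with the same
total mass is worse, strictly so unless \<open>q = x\<close>. The bound on \<open>b\<close> is exactly what keeps
the smallest coordinate, \<open>x\<^sub>M\<close>, nonnegative.\<close>

definition tangent_gap :: "real \<Rightarrow> real \<Rightarrow> real \<Rightarrow> real" where
  "tangent_gap K x y =
     (1 - exp (- K * x)) + K * exp (- K * x) * (y - x) - (1 - exp (- K * y))"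

lemma tangent_gap_eq: "tangent_gap K x y = exp (- K * x) * (exp (- K * (y - x)) - (1 - K * (y - x)))"
  unfolding tangent_gap_def by (simp add: algebra_simps flip: exp_add)

lemma tangent_gap_nonneg: "0 \<le> tangent_gap K x y"
  unfolding tangent_gap_eq using exp_minus_ge[of "K * (y - x)"] by simp

lemma tangent_gap_pos:
  assumes "K \<noteq> 0" "y \<noteq> x"
  shows "0 < tangent_gap K x y"
  unfolding tangent_gap_eq using assms exp_minus_greater[of "K * (y - x)"] by simp

lemma sum_utility_diff_eq_sum_tangent_gap:
  fixes p x q :: "'a \<Rightarrow> real"
  assumes marginal: "\<And>i. i \<in> A \<Longrightarrow> p i * exp (- K * x i) = c"
    and mass: "sum q A = sum x A"
  shows "(\<Sum>i\<in>A. p i * (1 - exp (- K * x i))) - (\<Sum>i\<in>A. p i * (1 - exp (- K * q i)))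
       = (\<Sum>i\<in>A. p i * tangent_gap K (x i) (q i))"
proof -
  have "p i * tangent_gap K (x i) (q i)
      = p i * (1 - exp (- K * x i)) + K * c * (q i - x i) - p i * (1 - exp (- K * q i))"
    if "i \<in> A" for i
    using marginal[OF that, symmetric] unfolding tangent_gap_def by (simp add: algebra_simps)
  then have "(\<Sum>i\<in>A. p i * tangent_gap K (x i) (q i))
      = (\<Sum>i\<in>A. p i * (1 - exp (- K * x i))) + K * c * (sum q A - sum x A)
        - (\<Sum>i\<in>A. p i * (1 - exp (- K * q i)))"
    by (simp add: sum.distrib sum_subtractf sum_distrib_left right_diff_distrib)
  with mass show ?thesis by simp
qed

lemma equal_marginal_utility_imp_max:
  fixes p x q :: "'a \<Rightarrow> real"
  assumes "\<And>i. i \<in> A \<Longrightarrow> 0 \<le> p i"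
    and "\<And>i. i \<in> A \<Longrightarrow> p i * exp (- K * x i) = c"
    and "sum q A = sum x A"
  shows "(\<Sum>i\<in>A. p i * (1 - exp (- K * q i))) \<le> (\<Sum>i\<in>A. p i * (1 - exp (- K * x i)))"
proof -
  have "0 \<le> (\<Sum>i\<in>A. p i * tangent_gap K (x i) (q i))"
    using assms(1) tangent_gap_nonneg by (intro sum_nonneg mult_nonneg_nonneg) auto
  with sum_utility_diff_eq_sum_tangent_gap[OF assms(2,3)] show ?thesis by simp
qed

lemma equal_marginal_utility_max_unique:
  fixes p x q :: "'a \<Rightarrow> real"
  assumes "finite A" "K \<noteq> 0"
    and pos: "\<And>i. i \<in> A \<Longrightarrow> 0 < p i"
    and "\<And>i. i \<in> A \<Longrightarrow> p i * exp (- K * x i) = c"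
    and "sum q A = sum x A"
    and same: "(\<Sum>i\<in>A. p i * (1 - exp (- K * q i))) = (\<Sum>i\<in>A. p i * (1 - exp (- K * x i)))"
    and "i \<in> A"
  shows "q i = x i"
proof (rule ccontr)
  assume "q i \<noteq> x i"
  have nonneg: "0 \<le> p j * tangent_gap K (x j) (q j)" if "j \<in> A" for j
    using less_imp_le[OF pos[OF that]] tangent_gap_nonneg by (rule mult_nonneg_nonneg)
  have "(\<Sum>j\<in>A. p j * tangent_gap K (x j) (q j)) = 0"
    using sum_utility_diff_eq_sum_tangent_gap[OF assms(4,5)] same by linarith
  then have "p i * tangent_gap K (x i) (q i) = 0"
    using sum_nonneg_eq_0_iff[OF \<open>finite A\<close> nonneg] \<open>i \<in> A\<close> by simp
  moreover have "0 < p i * tangent_gap K (x i) (q i)"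
    using pos[OF \<open>i \<in> A\<close>] tangent_gap_pos[OF \<open>K \<noteq> 0\<close> \<open>q i \<noteq> x i\<close>] by (rule mult_pos_pos)
  ultimately show False by linarith
qed

definition cache_opt :: "nat \<Rightarrow> real \<Rightarrow> nat \<Rightarrow> real" where
  "cache_opt M b i = 1 / real M + b / real M * (\<Sum>j=1..M. ln (real j / real i))"

lemma ln_fact_eq_sum_ln: "ln (fact M) = (\<Sum>j=1..M. ln (real j))"
  unfolding fact_prod by (subst of_nat_prod, subst ln_prod) auto

lemma ln_fact_le: "ln (fact M) \<le> real M * ln (real M)"
proof (cases "M = 0")
  case False
  then have "ln (fact M) \<le> ln (real (M ^ M))"
    using fact_le_power[of M] by (subst ln_le_cancel_iff) auto
  then show ?thesis by (simp add: ln_realpow)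
qed simp

lemma sum_ln_div_eq: "0 < i \<Longrightarrow> (\<Sum>j=1..M. ln (real j / real i)) = ln (fact M) - real M * ln (real i)"
  by (simp add: ln_div sum_subtractf ln_fact_eq_sum_ln)

lemma cache_opt_eq:
  assumes "0 < i" "0 < M"
  shows "cache_opt M b i = (1 + b * (ln (fact M) - real M * ln (real i))) / real M"
  unfolding cache_opt_def sum_ln_div_eq[OF \<open>0 < i\<close>] using assms by (simp add: field_simps)

lemma cache_opt_shift:
  assumes "0 < i" "0 < M"
  shows "1 / real M + b / real M * (\<Sum>j=1..M. ln (real j / real (i + 1)))
           + b * ln (real (i + 1) / real i) = cache_opt M b i"
proof -
  have sum_eq: "(\<Sum>j=1..M. ln (real j / real (i + 1))) = ln (fact M) - real M * ln (real (i + 1))"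
    by (rule sum_ln_div_eq) simp
  have ln_eq: "ln (real (i + 1) / real i) = ln (real (i + 1)) - ln (real i)"
    using assms by (simp add: ln_div)
  show ?thesis
    unfolding sum_eq ln_eq cache_opt_eq[OF assms] using assms by (simp add: field_simps)
qed

lemma sum_cache_opt:
  assumes "0 < M"
  shows "(\<Sum>i=1..M. cache_opt M b i) = 1"
proof -
  have "(\<Sum>i=1..M. cache_opt M b i)
      = (\<Sum>i=1..M. 1 / real M + b / real M * (ln (fact M) - real M * ln (real i)))"
    unfolding cache_opt_def by (intro sum.cong refl, subst sum_ln_div_eq) auto
  also have "\<dots> = real M * (1 / real M) + b / real M * (\<Sum>i=1..M. ln (fact M) - real M * ln (real i))"
    by (simp add: sum.distrib sum_distrib_left)
  also have "(\<Sum>i=1..M. ln (fact M) - real M * ln (real i)) = 0"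
    by (simp add: sum_subtractf ln_fact_eq_sum_ln flip: sum_distrib_left)
  finally show ?thesis using assms by simp
qed

lemma cache_opt_nonneg:
  assumes "0 \<le> b" and b_le: "b \<le> 1 / (real M * ln (real M) - ln (fact M))"
    and i: "i \<in> {1..M}"
  shows "0 \<le> cache_opt M b i"
proof -
  have "b * (real M * ln (real M) - ln (fact M)) \<le> 1"
  proof (cases "real M * ln (real M) - ln (fact M) = 0")
    case False
    then have "0 < real M * ln (real M) - ln (fact M)" using ln_fact_le[of M] by linarith
    with b_le show ?thesis by (simp add: field_simps)
  qed simp
  moreover have "b * (real M * ln (real i)) \<le> b * (real M * ln (real M))"
    using \<open>0 \<le> b\<close> i by (intro mult_left_mono) auto
  ultimately show ?thesis
    using i by (simp add: cache_opt_eq algebra_simps)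
qed

text \<open>With \<open>K b = \<gamma>\<^sub>r\<close>, the factor \<open>exp (\<gamma>\<^sub>r ln i)\<close> in \<open>exp (-K x\<^sub>i)\<close> cancels the Zipf weight \<open>i powr -\<gamma>\<^sub>r\<close>.\<close>

lemma p_req_exp_cache_opt:
  assumes "K \<noteq> 0" and i: "i \<in> {1..M}"
  shows "p_req M gr i * exp (- K * cache_opt M (gr / K) i)
       = exp (- (K + gr * ln (fact M)) / real M) / (\<Sum>j=1..M. real j powr (- gr))"
proof -
  have "- K * cache_opt M (gr / K) i = - (K + gr * ln (fact M)) / real M + gr * ln (real i)"
    using assms by (simp add: cache_opt_eq field_simps)
  moreover have "real i powr (- gr) * exp (gr * ln (real i)) = 1"
    using i by (simp add: powr_def flip: exp_add)
  ultimately show ?thesis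
    unfolding p_req_def by (simp add: exp_add)
qed

lemma p_req_pos: "i \<in> {1..M} \<Longrightarrow> 0 < p_req M gr i"
  unfolding p_req_def by (auto intro!: divide_pos_pos sum_pos)

theorem lemma7:
  fixes M :: nat and gr K b :: real and pc a :: "nat \<Rightarrow> real"
  assumes "M \<ge> 2" and "gr \<ge> 0" and "K > 0"
    and b_def: "b = gr / K"
    and b_le: "b \<le> 1 / (real M * ln (real M) - ln (fact M))"
    and a_def: "\<And>i. a i = 1 / real M + b / real M * (\<Sum>j=1..M. ln (real j / real (i + 1)))"
    and pc_def: "\<And>i. pc i = a i + b * ln (real (i + 1) / real i)"
  shows "(\<forall>i\<in>{1..M}. pc i = 1 / real M + b / real M * (\<Sum>j=1..M. ln (real j / real i)))
       \<and> (\<forall>i\<in>{1..M}. 0 \<le> pc i) \<and> (\<Sum>i=1..M. pc i) = 1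
       \<and> prob_vec M pc
       \<and> (\<forall>q. prob_vec M q \<longrightarrow> succ_obj M gr K q \<le> succ_obj M gr K pc)
       \<and> (\<forall>q. prob_vec M q \<and> succ_obj M gr K q = succ_obj M gr K pc \<longrightarrow> (\<forall>i\<in>{1..M}. q i = pc i))"
proof -
  have pc_eq: "pc i = cache_opt M b i" if "i \<in> {1..M}" for i
    unfolding pc_def a_def using that assms(1) by (intro cache_opt_shift) auto
  have nonneg: "\<forall>i\<in>{1..M}. 0 \<le> pc i"
    using cache_opt_nonneg[OF _ b_le] assms(2,3) b_def pc_eq by simp
  have "(\<Sum>i=1..M. pc i) = (\<Sum>i=1..M. cache_opt M b i)"
    using pc_eq by (rule sum.cong[OF refl])
  also have "\<dots> = 1"
    using assms(1) by (intro sum_cache_opt) simp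
  finally have sum1: "(\<Sum>i=1..M. pc i) = 1" .
  define c where "c = exp (- (K + gr * ln (fact M)) / real M) / (\<Sum>j=1..M. real j powr (- gr))"
  have marginal: "p_req M gr i * exp (- K * pc i) = c" if "i \<in> {1..M}" for i
    using p_req_exp_cache_opt[of K i M gr] that assms(3) b_def by (simp add: pc_eq c_def)
  have mass: "sum q {1..M} = sum pc {1..M}" if "prob_vec M q" for q
    using that sum1 by (simp add: prob_vec_def)
  have opt: "succ_obj M gr K q \<le> succ_obj M gr K pc" if "prob_vec M q" for q
    unfolding succ_obj_def
    by (rule equal_marginal_utility_imp_max[OF less_imp_le[OF p_req_pos] marginal mass[OF that]])
  have unique: "q i = pc i"
    if "prob_vec M q" "succ_obj M gr K q = succ_obj M gr K pc" "i \<in> {1..M}" for q i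
    using that(2) unfolding succ_obj_def
    by (intro equal_marginal_utility_max_unique[OF _ _ p_req_pos marginal mass[OF that(1)] _ that(3)])
      (use assms(3) in auto)
  show ?thesis
    using nonneg sum1 opt unique pc_eq by (simp add: prob_vec_def cache_opt_def)
qed

end
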